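(* There exist an environment $E$ and a total preorder $\succeq$ on $\Pi^E$ such that $\succeq\in\mathrm{Ord}_{\mathrm{RM}}(E)$ but $\succeq\notin\mathrm{Ord}_{\mathrm{ONMR}}(E)$.
   Context: An environment is a tuple $E=(\mathcal S,\mathcal A,\mathcal T,\mathcal I)$ where $\mathcal S,\mathcal A$ are finite nonempty sets, $\mathcal T:\mathcal S\times\mathcal A\to\Delta(\mathcal S)$ and $\mathcal I\in\Delta(\mathcal S)$. A policy is a map $\pi:\mathcal S\to\Delta(\mathcal A)$ (stationary, possibly stochastic); $\Pi^E$ denotes the set of all policies. A trajectory $\xi=(s_0,a_0,s_1,a_1,\dots)$ is generated under $\pi$ by $s_0\sim\mathcal I$, $a_t\sim\pi(s_t)$, $s_{t+1}\sim\mathcal T(s_t,a_t)$; $\mathbb E^\pi_\xi$ denotes expectation under this distribution. An objective-specification formalism $X$ assigns to each environment $E$ a set of objective specifications, each inducing a total preorder $\succeq$ on $\Pi^E$; $\mathrm{Ord}_X(E)$ is the set of total preorders so induced. A specification defining a scalar $J:\Pi^E\to\mathbb R$ induces $\pi_1\succeq\pi_2\iff J(\pi_1)\ge J(\pi_2)$. RM (reward machines): specification $(U,u_0,\delta_U,\delta_{\mathcal R},\gamma)$ with $U$ a finite set, $u_0\in U$, $\delta_U:U\times\mathcal S\times\mathcal A\times\mathcal S\to U$, $\delta_{\mathcal R}:U\times U\to(\mathcal S\times\mathcal A\times\mathcal S\to\mathbb R)$, $\gamma\in[0,1)$; along a trajectory $u_{t+1}=\delta_U(u_t,s_t,a_t,s_{t+1})$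 and $J(\pi)=\mathbb E^\pi_\xi[\sum_{t=0}^\infty\gamma^t\,\delta_{\mathcal R}(u_t,u_{t+1})(s_t,a_t,s_{t+1})]$. ONMR: specification $(\mathcal R,f,\gamma)$ with $\mathcal R:\mathcal S\times\mathcal A\times\mathcal S\to\mathbb R$, $f:\mathbb R\to\mathbb R$, $\gamma\in[0,1)$; $J(\pi)=f\big(\mathbb E^\pi_\xi[\sum_{t=0}^\infty\gamma^t\mathcal R(s_t,a_t,s_{t+1})]\big)$. *)

theory Defs
  imports "HOL-Probability.Probability"
begin

record env =
  St :: "nat set"
  Act :: "nat set"
  Trans :: "nat \<Rightarrow> nat \<Rightarrow> nat pmf"
  Init :: "nat pmf"

definition valid_env :: "env \<Rightarrow> bool" where
  "valid_env E \<longleftrightarrow> finite (St E) \<and> St E \<noteq> {} \<and> finite (Act E) \<and> Act E \<noteq> {}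
     \<and> set_pmf (Init E) \<subseteq> St E
     \<and> (\<forall>s\<in>St E. \<forall>a\<in>Act E. set_pmf (Trans E s a) \<subseteq> St E)"

definition policies :: "env \<Rightarrow> (nat \<Rightarrow> nat pmf) set" where
  "policies E = {\<pi>. \<forall>s\<in>St E. set_pmf (\<pi> s) \<subseteq> Act E}"

(* Distribution of the trajectory prefix up to time t: the list of the first t
   transitions (s_i, a_i, s_{i+1}) together with the current state s_t. *)
fun hist :: "env \<Rightarrow> (nat \<Rightarrow> nat pmf) \<Rightarrow> nat \<Rightarrow> ((nat \<times> nat \<times> nat) list \<times> nat) pmf" where
  "hist E \<pi> 0 = map_pmf (\<lambda>s. ([], s)) (Init E)"
| "hist E \<pi> (Suc t) = bind_pmf (hist E \<pi> t) (\<lambda>(h, s).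
      bind_pmf (\<pi> s) (\<lambda>a. map_pmf (\<lambda>s'. (h @ [(s, a, s')], s')) (Trans E s a)))"

definition rm_run :: "(nat \<Rightarrow> nat \<Rightarrow> nat \<Rightarrow> nat \<Rightarrow> nat) \<Rightarrow> nat \<Rightarrow> (nat \<times> nat \<times> nat) list \<Rightarrow> nat" where
  "rm_run dU u0 h = foldl (\<lambda>u (s, a, s'). dU u s a s') u0 h"

definition rm_step_reward ::
  "(nat \<Rightarrow> nat \<Rightarrow> nat \<Rightarrow> nat \<Rightarrow> nat) \<Rightarrow> (nat \<Rightarrow> nat \<Rightarrow> nat \<Rightarrow> nat \<Rightarrow> nat \<Rightarrow> real) \<Rightarrow> nat
    \<Rightarrow> (nat \<times> nat \<times> nat) list \<Rightarrow> real" where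
  "rm_step_reward dU dR u0 h =
     (let (s, a, s') = last h; u = rm_run dU u0 (butlast h) in dR u (dU u s a s') s a s')"

(* J(pi) = E[sum_t gamma^t delta_R(u_t,u_{t+1})(s_t,a_t,s_{t+1})], written as
   sum_t gamma^t E[reward at step t] (the rewards are bounded, so this equals the
   expectation of the discounted sum). *)
definition J_RM :: "env \<Rightarrow> (nat \<Rightarrow> nat \<Rightarrow> nat \<Rightarrow> nat \<Rightarrow> nat) \<Rightarrow> (nat \<Rightarrow> nat \<Rightarrow> nat \<Rightarrow> nat \<Rightarrow> nat \<Rightarrow> real)
    \<Rightarrow> nat \<Rightarrow> real \<Rightarrow> (nat \<Rightarrow> nat pmf) \<Rightarrow> real" where
  "J_RM E dU dR u0 \<gamma> \<pi> =
     (\<Sum>t. \<gamma> ^ t * measure_pmf.expectation (hist E \<pi> (Suc t)) (\<lambda>(h, s). rm_step_reward dU dR u0 h))"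

definition valid_RM :: "env \<Rightarrow> nat set \<Rightarrow> nat \<Rightarrow> (nat \<Rightarrow> nat \<Rightarrow> nat \<Rightarrow> nat \<Rightarrow> nat) \<Rightarrow> real \<Rightarrow> bool" where
  "valid_RM E U u0 dU \<gamma> \<longleftrightarrow> finite U \<and> u0 \<in> U
     \<and> (\<forall>u\<in>U. \<forall>s\<in>St E. \<forall>a\<in>Act E. \<forall>s'\<in>St E. dU u s a s' \<in> U)
     \<and> 0 \<le> \<gamma> \<and> \<gamma> < 1"

definition induced_order :: "env \<Rightarrow> ((nat \<Rightarrow> nat pmf) \<Rightarrow> real) \<Rightarrow> (nat \<Rightarrow> nat pmf) rel" where
  "induced_order E J = {(p1, p2). p1 \<in> policies E \<and> p2 \<in> policies E \<and> J p1 \<ge> J p2}"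

definition Ord_RM :: "env \<Rightarrow> (nat \<Rightarrow> nat pmf) rel set" where
  "Ord_RM E = {R. \<exists>U u0 dU dR \<gamma>. valid_RM E U u0 dU \<gamma>
                    \<and> R = induced_order E (J_RM E dU dR u0 \<gamma>)}"

definition J_ONMR :: "env \<Rightarrow> (nat \<Rightarrow> nat \<Rightarrow> nat \<Rightarrow> real) \<Rightarrow> (real \<Rightarrow> real) \<Rightarrow> real
    \<Rightarrow> (nat \<Rightarrow> nat pmf) \<Rightarrow> real" where
  "J_ONMR E Rw f \<gamma> \<pi> =
     f (\<Sum>t. \<gamma> ^ t * measure_pmf.expectation (hist E \<pi> (Suc t))
                         (\<lambda>(h, s). case last h of (s0, a, s1) \<Rightarrow> Rw s0 a s1))"

definition Ord_ONMR :: "env \<Rightarrow> (nat \<Rightarrow> nat pmf) rel set" where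
  "Ord_ONMR E = {R. \<exists>Rw f \<gamma>. 0 \<le> \<gamma> \<and> \<gamma> < 1 \<and> R = induced_order E (J_ONMR E Rw f \<gamma>)}"

end

theory Submission imports Defs begin

(* Take the environment in which the agent acts once in a start state and then forever in an
   absorbing state, and the policies that play action 1 with probability p in the start state
   and with probability q afterwards.  A reward machine that remembers the first action and
   rewards every later repetition of it has value proportional to pq + (1 - p)(1 - q), which is
   1/2 + 2(p - 1/2)(q - 1/2).  A Markovian reward, by contrast, has an expected return that is
   affine in (p, q), so any f of it ties all policies on a line of (p, q); along that line the
   bilinear value of the reward machine is not constant, so the two orders differ. *)

lemma preorder_on_induced_order: "preorder_on (policies E) (induced_order E J)"
  by (auto simp: preorder_on_def induced_order_def refl_on_def trans_def)

lemma total_on_induced_order: "total_on (policies E) (induced_order E J)"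
  by (auto simp: total_on_def induced_order_def)

lemma induced_order_eq_imp_tie:
  assumes "induced_order E J1 = induced_order E J2"
    and "\<pi>1 \<in> policies E" "\<pi>2 \<in> policies E" "J2 \<pi>1 = J2 \<pi>2"
  shows "J1 \<pi>1 = J1 \<pi>2"
proof -
  have "(\<pi>1, \<pi>2) \<in> induced_order E J1" "(\<pi>2, \<pi>1) \<in> induced_order E J1"
    using assms by (auto simp: induced_order_def)
  then show ?thesis by (auto simp: induced_order_def)
qed

definition rm_state_distribution ::
  "env \<Rightarrow> (nat \<Rightarrow> nat pmf) \<Rightarrow> (nat \<Rightarrow> nat \<Rightarrow> nat \<Rightarrow> nat \<Rightarrow> nat) \<Rightarrow> nat \<Rightarrow> nat \<Rightarrow> (nat \<times> nat) pmf"
  where "rm_state_distribution E \<pi> dU u0 t = map_pmf (\<lambda>(h, s). (rm_run dU u0 h, s)) (hist E \<pi> t)"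

lemma rm_state_distribution_0: "rm_state_distribution E \<pi> dU u0 0 = map_pmf (\<lambda>s. (u0, s)) (Init E)"
  by (simp add: rm_state_distribution_def rm_run_def map_pmf_comp)

lemma rm_state_distribution_Suc:
  "rm_state_distribution E \<pi> dU u0 (Suc t) = rm_state_distribution E \<pi> dU u0 t \<bind>
     (\<lambda>(u, s). \<pi> s \<bind> (\<lambda>a. map_pmf (\<lambda>s'. (dU u s a s', s')) (Trans E s a)))"
  by (simp add: rm_state_distribution_def rm_run_def map_bind_pmf bind_map_pmf map_pmf_comp case_prod_beta)

lemma rm_step_reward_distribution:
  "map_pmf (\<lambda>(h, s). rm_step_reward dU dR u0 h) (hist E \<pi> (Suc t)) = rm_state_distribution E \<pi> dU u0 t \<bind>
     (\<lambda>(u, s). \<pi> s \<bind> (\<lambda>a. map_pmf (\<lambda>s'. dR u (dU u s a s') s a s') (Trans E s a)))"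
  by (simp add: rm_state_distribution_def rm_step_reward_def Let_def map_bind_pmf bind_map_pmf map_pmf_comp case_prod_beta)

lemma last_transition_distribution:
  "map_pmf (\<lambda>(h, s). last h) (hist E \<pi> (Suc t)) = map_pmf snd (hist E \<pi> t) \<bind>
     (\<lambda>s. \<pi> s \<bind> (\<lambda>a. map_pmf (\<lambda>s'. (s, a, s')) (Trans E s a)))"
  by (simp add: map_bind_pmf bind_map_pmf map_pmf_comp case_prod_beta)

definition absorbing_env :: env where
  "absorbing_env = \<lparr>St = {0, 1}, Act = {0, 1}, Trans = (\<lambda>s a. return_pmf 1), Init = return_pmf 0\<rparr>"

lemma valid_absorbing_env: "valid_env absorbing_env"
  by (simp add: valid_env_def absorbing_env_def)

lemma state_absorbing_env: "map_pmf snd (hist absorbing_env \<pi> t) = return_pmf (if t = 0 then 0 else 1)"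
  by (induction t) (simp_all add: absorbing_env_def map_pmf_comp map_bind_pmf case_prod_beta bind_return_pmf)

definition remember_first_action :: "nat \<Rightarrow> nat \<Rightarrow> nat \<Rightarrow> nat \<Rightarrow> nat" where
  "remember_first_action u s a s' = (if u = 0 then Suc a else u)"

definition reward_first_action_repeated :: "nat \<Rightarrow> nat \<Rightarrow> nat \<Rightarrow> nat \<Rightarrow> nat \<Rightarrow> real" where
  "reward_first_action_repeated u u' s a s' = (if u = Suc a then 1 else 0)"

lemma valid_RM_remember_first_action:
  "0 \<le> \<gamma> \<Longrightarrow> \<gamma> < 1 \<Longrightarrow> valid_RM absorbing_env {0, 1, 2} 0 remember_first_action \<gamma>"
  by (auto simp: valid_RM_def absorbing_env_def remember_first_action_def)

lemma rm_state_distribution_remember_first_action: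
  "rm_state_distribution absorbing_env \<pi> remember_first_action 0 (Suc t) = map_pmf (\<lambda>a. (Suc a, 1)) (\<pi> 0)"
proof (induction t)
  case 0
  then show ?case
    by (simp add: rm_state_distribution_Suc rm_state_distribution_0 absorbing_env_def remember_first_action_def bind_return_pmf map_pmf_def)
next
  case (Suc t)
  show ?case
    by (subst rm_state_distribution_Suc, subst Suc)
      (simp add: bind_map_pmf absorbing_env_def remember_first_action_def map_pmf_def bind_assoc_pmf bind_return_pmf)
qed

definition coin_policy :: "real \<Rightarrow> real \<Rightarrow> nat \<Rightarrow> nat pmf" where
  "coin_policy p q s = map_pmf of_bool (bernoulli_pmf (if s = 0 then p else q))"

lemma coin_policy_in_policies: "coin_policy p q \<in> policies absorbing_env"
  by (auto simp: policies_def absorbing_env_def coin_policy_def)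

definition agree_prob :: "real \<Rightarrow> real \<Rightarrow> real" where
  "agree_prob p q = p * q + (1 - p) * (1 - q)"

lemma expectation_as_distribution:
  "measure_pmf.expectation M g = measure_pmf.expectation (map_pmf g M) (\<lambda>x. x :: real)"
  by simp

lemma expected_reward_first_action_repeated:
  assumes "p \<in> {0..1}" "q \<in> {0..1}"
  shows "measure_pmf.expectation (hist absorbing_env (coin_policy p q) (Suc t))
      (\<lambda>(h, s). rm_step_reward remember_first_action reward_first_action_repeated 0 h)
    = (if t = 0 then 0 else agree_prob p q)"
proof (cases t)
  case 0
  then show ?thesis
    by (subst expectation_as_distribution, simp only: rm_step_reward_distribution)
      (simp add: rm_state_distribution_0 absorbing_env_def reward_first_action_repeated_def bind_return_pmf map_pmf_def)
next
  case (Suc t')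
  have "map_pmf (\<lambda>(h, s). rm_step_reward remember_first_action reward_first_action_repeated 0 h)
      (hist absorbing_env (coin_policy p q) (Suc t))
    = bernoulli_pmf p \<bind> (\<lambda>b. map_pmf (\<lambda>c. if b = c then 1 else 0) (bernoulli_pmf q))"
    unfolding Suc rm_step_reward_distribution rm_state_distribution_remember_first_action
    by (simp add: coin_policy_def absorbing_env_def reward_first_action_repeated_def
        bind_map_pmf map_pmf_def bind_assoc_pmf bind_return_pmf of_bool_eq_iff)
  then have "measure_pmf.expectation (hist absorbing_env (coin_policy p q) (Suc t))
      (\<lambda>(h, s). rm_step_reward remember_first_action reward_first_action_repeated 0 h)
    = measure_pmf.expectation
        (bernoulli_pmf p \<bind> (\<lambda>b. map_pmf (\<lambda>c. if b = c then 1 else 0) (bernoulli_pmf q))) (\<lambda>x. x)"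
    by (subst expectation_as_distribution) simp
  also have "\<dots> = agree_prob p q"
    using assms by (subst pmf_expectation_bind[of UNIV]) (auto simp: UNIV_bool agree_prob_def)
  finally show ?thesis using Suc by simp
qed

lemma suminf_power_mult_eventually_const:
  fixes \<gamma> :: real
  assumes "\<bar>\<gamma>\<bar> < 1" "e 0 = a" "\<And>t. e (Suc t) = c"
  shows "(\<Sum>t. \<gamma> ^ t * e t) = a + \<gamma> / (1 - \<gamma>) * c"
proof -
  have "(\<lambda>t. \<gamma> * c * \<gamma> ^ t) sums (\<gamma> * c * (1 / (1 - \<gamma>)))"
    using assms(1) by (intro sums_mult geometric_sums) simp
  then have "(\<lambda>t. \<gamma> ^ Suc t * e (Suc t)) sums (\<gamma> / (1 - \<gamma>) * c)"
    using assms(3) by (simp add: mult_ac)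
  then have "(\<lambda>t. \<gamma> ^ t * e t) sums (\<gamma> / (1 - \<gamma>) * c + \<gamma> ^ 0 * e 0)"
    by (rule iffD1[OF sums_Suc_iff[where f = "\<lambda>t. \<gamma> ^ t * e t"]])
  then show ?thesis using assms(2) by (simp add: sums_unique[symmetric])
qed

lemma J_RM_coin_policy:
  assumes "p \<in> {0..1}" "q \<in> {0..1}" "0 \<le> \<gamma>" "\<gamma> < 1"
  shows "J_RM absorbing_env remember_first_action reward_first_action_repeated 0 \<gamma> (coin_policy p q)
    = \<gamma> / (1 - \<gamma>) * agree_prob p q"
proof -
  have "J_RM absorbing_env remember_first_action reward_first_action_repeated 0 \<gamma> (coin_policy p q)
    = 0 + \<gamma> / (1 - \<gamma>) * agree_prob p q"
    unfolding J_RM_def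
    by (rule suminf_power_mult_eventually_const)
      (use assms in \<open>simp_all add: expected_reward_first_action_repeated del: hist.simps\<close>)
  then show ?thesis by simp
qed

lemma J_ONMR_coin_policy_affine:
  assumes "0 \<le> \<gamma>" "\<gamma> < 1"
  obtains c B C where
    "\<And>p q. p \<in> {0..1} \<Longrightarrow> q \<in> {0..1} \<Longrightarrow>
      J_ONMR absorbing_env Rw f \<gamma> (coin_policy p q) = f (c + B * p + C * q)"
proof
  fix p q :: real
  assume pq: "p \<in> {0..1}" "q \<in> {0..1}"
  have expected_Rw: "measure_pmf.expectation (hist absorbing_env (coin_policy p q) (Suc t))
      (\<lambda>(h, s). case last h of (s0, a, s1) \<Rightarrow> Rw s0 a s1)
    = (if t = 0 then Rw 0 1 1 * p + Rw 0 0 1 * (1 - p) else Rw 1 1 1 * q + Rw 1 0 1 * (1 - q))" for t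
  proof -
    have "measure_pmf.expectation (hist absorbing_env (coin_policy p q) (Suc t))
        (\<lambda>(h, s). case last h of (s0, a, s1) \<Rightarrow> Rw s0 a s1)
      = measure_pmf.expectation (map_pmf (\<lambda>(h, s). last h) (hist absorbing_env (coin_policy p q) (Suc t)))
          (\<lambda>(s0, a, s1). Rw s0 a s1)"
      by (simp add: case_prod_unfold)
    also have "map_pmf (\<lambda>(h, s). last h) (hist absorbing_env (coin_policy p q) (Suc t))
      = map_pmf (\<lambda>b. (if t = 0 then 0 else 1, of_bool b, 1)) (bernoulli_pmf (if t = 0 then p else q))"
      unfolding last_transition_distribution state_absorbing_env
      by (simp add: absorbing_env_def coin_policy_def bind_return_pmf map_pmf_def bind_assoc_pmf)
    also have "measure_pmf.expectation \<dots> (\<lambda>(s0, a, s1). Rw s0 a s1)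
      = (if t = 0 then Rw 0 1 1 * p + Rw 0 0 1 * (1 - p) else Rw 1 1 1 * q + Rw 1 0 1 * (1 - q))"
      using pq by simp
    finally show ?thesis .
  qed
  have "J_ONMR absorbing_env Rw f \<gamma> (coin_policy p q) =
    f ((Rw 0 1 1 * p + Rw 0 0 1 * (1 - p)) + \<gamma> / (1 - \<gamma>) * (Rw 1 1 1 * q + Rw 1 0 1 * (1 - q)))"
    unfolding J_ONMR_def
    by (rule arg_cong[where f = f], rule suminf_power_mult_eventually_const)
      (use assms in \<open>simp_all add: expected_Rw del: hist.simps\<close>)
  then show "J_ONMR absorbing_env Rw f \<gamma> (coin_policy p q) =
    f ((Rw 0 0 1 + \<gamma> / (1 - \<gamma>) * Rw 1 0 1) + (Rw 0 1 1 - Rw 0 0 1) * p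
       + \<gamma> / (1 - \<gamma>) * (Rw 1 1 1 - Rw 1 0 1) * q)"
    by (simp add: algebra_simps)
qed

lemma agree_prob_centered: "agree_prob p q = 1 / 2 + 2 * (p - 1 / 2) * (q - 1 / 2)"
  by (simp add: agree_prob_def algebra_simps)

lemma affine_tie_separates_agree_prob:
  fixes B C :: real
  obtains p1 q1 p2 q2 where "p1 \<in> {0..1}" "q1 \<in> {0..1}" "p2 \<in> {0..1}" "q2 \<in> {0..1}"
    "B * p1 + C * q1 = B * p2 + C * q2" "agree_prob p1 q1 \<noteq> agree_prob p2 q2"
proof (cases "B = 0 \<or> C = 0")
  case True
  then show ?thesis
  proof
    assume "B = 0"
    then show ?thesis by (intro that[of 0 0 1 0]) (simp_all add: agree_prob_def)
  next
    assume "C = 0"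
    then show ?thesis by (intro that[of 0 0 0 1]) (simp_all add: agree_prob_def)
  qed
next
  case False
  define t where "t = 1 / (2 * (\<bar>B\<bar> + \<bar>C\<bar>))"
  have "t \<noteq> 0" "\<bar>C * t\<bar> \<le> 1 / 2" "\<bar>B * t\<bar> \<le> 1 / 2"
    using False by (auto simp: t_def abs_mult field_simps)
  \<comment> \<open>Move from the centre along the tie direction \<open>(C, -B)\<close>, where agree_prob is
    \<open>1/2 - 2 B C t\<^sup>2\<close>.\<close>
  then show ?thesis
    using False
    by (intro that[of "1 / 2" "1 / 2" "1 / 2 + C * t" "1 / 2 - B * t"])
      (auto simp: agree_prob_centered abs_le_iff algebra_simps)
qed

lemma induced_order_remember_first_action_not_ONMR:
  "induced_order absorbing_env (J_RM absorbing_env remember_first_action reward_first_action_repeated 0 (1 / 2))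
     \<notin> Ord_ONMR absorbing_env"
proof
  let ?J = "J_RM absorbing_env remember_first_action reward_first_action_repeated 0 (1 / 2)"
  assume "induced_order absorbing_env ?J \<in> Ord_ONMR absorbing_env"
  then obtain Rw f \<gamma> where \<gamma>: "0 \<le> \<gamma>" "\<gamma> < 1"
    and same_order: "induced_order absorbing_env ?J = induced_order absorbing_env (J_ONMR absorbing_env Rw f \<gamma>)"
    unfolding Ord_ONMR_def by blast
  obtain c B C where J_ONMR_affine: "\<And>p q. p \<in> {0..1} \<Longrightarrow> q \<in> {0..1} \<Longrightarrow>
      J_ONMR absorbing_env Rw f \<gamma> (coin_policy p q) = f (c + B * p + C * q)"
    using J_ONMR_coin_policy_affine[OF \<gamma>] by blast
  obtain p1 q1 p2 q2 where in_unit: "p1 \<in> {0..1}" "q1 \<in> {0..1}" "p2 \<in> {0..1}" "q2 \<in> {0..1}"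
    and tie: "B * p1 + C * q1 = B * p2 + C * q2" and agree_differs: "agree_prob p1 q1 \<noteq> agree_prob p2 q2"
    by (rule affine_tie_separates_agree_prob)
  have "J_ONMR absorbing_env Rw f \<gamma> (coin_policy p1 q1) = J_ONMR absorbing_env Rw f \<gamma> (coin_policy p2 q2)"
    using in_unit tie by (simp add: J_ONMR_affine add.assoc)
  then have "?J (coin_policy p1 q1) = ?J (coin_policy p2 q2)"
    by (rule induced_order_eq_imp_tie[OF same_order coin_policy_in_policies coin_policy_in_policies])
  then show False
    using in_unit agree_differs by (simp add: J_RM_coin_policy)
qed

theorem mainTheorem20:
  shows "\<exists>E R. valid_env E \<and> preorder_on (policies E) R \<and> total_on (policies E) R
           \<and> R \<in> Ord_RM E \<and> R \<notin> Ord_ONMR E"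
proof (intro exI conjI)
  let ?J = "J_RM absorbing_env remember_first_action reward_first_action_repeated 0 (1 / 2)"
  show "valid_env absorbing_env"
    by (rule valid_absorbing_env)
  show "preorder_on (policies absorbing_env) (induced_order absorbing_env ?J)"
    by (rule preorder_on_induced_order)
  show "total_on (policies absorbing_env) (induced_order absorbing_env ?J)"
    by (rule total_on_induced_order)
  have "valid_RM absorbing_env {0, 1, 2} 0 remember_first_action (1 / 2)"
    by (rule valid_RM_remember_first_action) simp_all
  then show "induced_order absorbing_env ?J \<in> Ord_RM absorbing_env"
    unfolding Ord_RM_def by blast
  show "induced_order absorbing_env ?J \<notin> Ord_ONMR absorbing_env"
    by (rule induced_order_remember_first_action_not_ONMR)
qed

end
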